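(* Let $T$ be an almost reduced linear trellis of length $n$, let $i\in\mathbb{Z}_n$ and $v,w\in V_i(T)$. If there exists a directed path in $T$ from $v$ to $w$, then there exists a directed path from $v$ to $w$ of length exactly $n$. In particular, if $T$ is connected and almost reduced, then for all $v,w\in V_0(T)$ there are paths of length $n$ from $v$ to $w$ and from $w$ to $v$.
   Context: Let $\mathbb{F}$ be a finite field and $n\ge1$; indices are taken in $\mathbb{Z}_n$. A trellis $T$ of length $n$ over $\mathbb{F}$ consists of pairwise disjoint finite vertex sets $V_i(T)$, $i\in\mathbb{Z}_n$, and edge sets $E_i(T)\subseteq V_i(T)\times\mathbb{F}\times V_{i+1}(T)$; $(v,\alpha,w)\in E_i(T)$ is an edge from $v$ to $w$. Trellises are trim. $T$ is linear if each $V_i(T)$ is an $\mathbb{F}$-vector space and each $E_i(T)$ a subspace. A path of length $m$ is $v_0\alpha_0v_1\cdots\alpha_{m-1}v_m$ with each $(v_j,\alpha_j,v_{j+1})$ an edge. A cycle is a closed path of length $n$ starting in $V_0(T)$; $T$ is almost reduced if every vertex lies on some cycle (equivalently, every vertex lies on a closed path of length $n$); connected if for any two distinct vertices $v,w$ there is a directed path from $v$ to $w$. *)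

theory Defs
  imports Complex_Main
begin

text \<open>A trellis of length n: vertices are pairs (i, x) with i < n and x in V i
  (so the vertex sets are pairwise disjoint by construction); the edge set E i
  consists of triples (x, a, y) with x in V i and y in V ((i+1) mod n).\<close>

definition is_edge :: "nat \<Rightarrow> (nat \<Rightarrow> ('v \<times> 'f \<times> 'v) set) \<Rightarrow> nat \<times> 'v \<Rightarrow> 'f \<Rightarrow> nat \<times> 'v \<Rightarrow> bool" where
  "is_edge n E p a q \<longleftrightarrow> fst p < n \<and> fst q = Suc (fst p) mod n \<and> (snd p, a, snd q) \<in> E (fst p)"

definition is_path :: "nat \<Rightarrow> (nat \<Rightarrow> ('v \<times> 'f \<times> 'v) set) \<Rightarrow> (nat \<times> 'v) list \<Rightarrow> 'f list \<Rightarrow> bool" where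
  "is_path n E vs as \<longleftrightarrow> length vs = Suc (length as) \<and>
     (\<forall>j < length as. is_edge n E (vs ! j) (as ! j) (vs ! Suc j))"

definition path_of_length :: "nat \<Rightarrow> (nat \<Rightarrow> ('v \<times> 'f \<times> 'v) set) \<Rightarrow> nat \<Rightarrow> nat \<times> 'v \<Rightarrow> nat \<times> 'v \<Rightarrow> bool" where
  "path_of_length n E m p q \<longleftrightarrow> (\<exists>vs as. is_path n E vs as \<and> length as = m \<and> hd vs = p \<and> last vs = q)"

definition has_path :: "nat \<Rightarrow> (nat \<Rightarrow> ('v \<times> 'f \<times> 'v) set) \<Rightarrow> nat \<times> 'v \<Rightarrow> nat \<times> 'v \<Rightarrow> bool" where
  "has_path n E p q \<longleftrightarrow> (\<exists>m. path_of_length n E m p q)"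

definition is_vertex :: "nat \<Rightarrow> (nat \<Rightarrow> 'v set) \<Rightarrow> nat \<times> 'v \<Rightarrow> bool" where
  "is_vertex n V p \<longleftrightarrow> fst p < n \<and> snd p \<in> V (fst p)"

definition trellis :: "nat \<Rightarrow> (nat \<Rightarrow> 'v set) \<Rightarrow> (nat \<Rightarrow> ('v \<times> 'f \<times> 'v) set) \<Rightarrow> bool" where
  "trellis n V E \<longleftrightarrow> n \<ge> 1 \<and>
     (\<forall>i < n. finite (V i) \<and> E i \<subseteq> V i \<times> UNIV \<times> V (Suc i mod n)) \<and>
     (\<forall>p. is_vertex n V p \<longrightarrow> (\<exists>a q. is_edge n E p a q) \<and> (\<exists>a q. is_edge n E q a p))"

definition linear_trellis :: "('f::field \<Rightarrow> 'v::ab_group_add \<Rightarrow> 'v) \<Rightarrow> nat \<Rightarrow> (nat \<Rightarrow> 'v set) \<Rightarrow> (nat \<Rightarrow> ('v \<times> 'f \<times> 'v) set) \<Rightarrow> bool" where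
  "linear_trellis scale n V E \<longleftrightarrow> trellis n V E \<and> vector_space scale \<and>
     (\<forall>i < n. module.subspace scale (V i) \<and>
        (0, 0, 0) \<in> E i \<and>
        (\<forall>x a y x' a' y'. (x, a, y) \<in> E i \<longrightarrow> (x', a', y') \<in> E i \<longrightarrow> (x + x', a + a', y + y') \<in> E i) \<and>
        (\<forall>c x a y. (x, a, y) \<in> E i \<longrightarrow> (scale c x, c * a, scale c y) \<in> E i))"

definition is_cycle :: "nat \<Rightarrow> (nat \<Rightarrow> ('v \<times> 'f \<times> 'v) set) \<Rightarrow> (nat \<times> 'v) list \<Rightarrow> 'f list \<Rightarrow> bool" where
  "is_cycle n E vs as \<longleftrightarrow> is_path n E vs as \<and> length as = n \<and> fst (hd vs) = 0 \<and> hd vs = last vs"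

definition almost_reduced :: "nat \<Rightarrow> (nat \<Rightarrow> 'v set) \<Rightarrow> (nat \<Rightarrow> ('v \<times> 'f \<times> 'v) set) \<Rightarrow> bool" where
  "almost_reduced n V E \<longleftrightarrow> (\<forall>p. is_vertex n V p \<longrightarrow> (\<exists>vs as. is_cycle n E vs as \<and> p \<in> set vs))"

definition connected_trellis :: "nat \<Rightarrow> (nat \<Rightarrow> 'v set) \<Rightarrow> (nat \<Rightarrow> ('v \<times> 'f \<times> 'v) set) \<Rightarrow> bool" where
  "connected_trellis n V E \<longleftrightarrow> (\<forall>p q. is_vertex n V p \<longrightarrow> is_vertex n V q \<longrightarrow> p \<noteq> q \<longrightarrow> has_path n E p q)"

end

theory Submission
  imports Defs
begin

text \<open>A path from layer i back to layer i has length k n.  In a linear trellis, paths of the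
  same length between the same layers can be added and scaled vertexwise, so being joined by a
  path of length n is an additive relation on V i.  Almost reducedness puts a closed path of
  length n at every vertex; adding the one at -z to the sum of paths x \<rightarrow> z and z \<rightarrow> y gives a
  path x \<rightarrow> y of length n.  So the relation is transitive, and a path of length k n collapses
  to one of length n.\<close>

lemma is_path_Nil_iff: "is_path n E vs [] \<longleftrightarrow> (\<exists>p. vs = [p])"
  unfolding is_path_def by (auto simp: length_Suc_conv)

lemma is_path_Cons_iff:
  "is_path n E (p # vs) (a # as) \<longleftrightarrow> vs \<noteq> [] \<and> is_edge n E p a (hd vs) \<and> is_path n E vs as"
  unfolding is_path_def by (cases vs) (auto simp: All_less_Suc2)

lemma path_of_length_0_iff: "path_of_length n E 0 p q \<longleftrightarrow> p = q"
  unfolding path_of_length_def by (auto simp: is_path_Nil_iff intro: exI[of _ "[p]"])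

lemma path_of_length_Suc_iff:
  "path_of_length n E (Suc m) p r \<longleftrightarrow> (\<exists>a q. is_edge n E p a q \<and> path_of_length n E m q r)"
proof
  assume "path_of_length n E (Suc m) p r"
  then obtain vs a as where "is_path n E (p # vs) (a # as)" "length as = m" "last (p # vs) = r"
    unfolding path_of_length_def by (auto simp: length_Suc_conv is_path_def neq_Nil_conv)
  then show "\<exists>a q. is_edge n E p a q \<and> path_of_length n E m q r"
    unfolding path_of_length_def by (auto simp: is_path_Cons_iff simp del: split_paired_Ex)
next
  assume "\<exists>a q. is_edge n E p a q \<and> path_of_length n E m q r"
  then obtain a vs as where "is_edge n E p a (hd vs)" "is_path n E vs as" "length as = m" "last vs = r"
    unfolding path_of_length_def by blast
  moreover have "vs \<noteq> []" using \<open>is_path n E vs as\<close> unfolding is_path_def by auto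
  ultimately show "path_of_length n E (Suc m) p r"
    unfolding path_of_length_def
    by (intro exI[of _ "p # vs"] exI[of _ "a # as"]) (simp add: is_path_Cons_iff)
qed

lemma path_of_length_add_iff:
  "path_of_length n E (m + k) p r \<longleftrightarrow> (\<exists>q. path_of_length n E m p q \<and> path_of_length n E k q r)"
  by (induction m arbitrary: p)
    (auto simp: path_of_length_0_iff path_of_length_Suc_iff simp del: split_paired_Ex)

lemma path_of_length_trans:
  "path_of_length n E m p q \<Longrightarrow> path_of_length n E k q r \<Longrightarrow> path_of_length n E (m + k) p r"
  using path_of_length_add_iff by blast

lemma path_of_length_fst:
  "path_of_length n E m p q \<Longrightarrow> fst p < n \<Longrightarrow> fst q = (fst p + m) mod n"
proof (induction m arbitrary: p)
  case 0
  then show ?case by (simp add: path_of_length_0_iff)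
next
  case (Suc m)
  then obtain a p' where "is_edge n E p a p'" "path_of_length n E m p' q"
    by (auto simp: path_of_length_Suc_iff)
  then show ?case using Suc.IH unfolding is_edge_def by (auto simp: mod_Suc_eq mod_add_left_eq)
qed

lemma path_of_length_same_layer_dvd:
  assumes "path_of_length n E m (i, x) (i, y)" "i < n"
  shows "n dvd m"
proof -
  have "(i + m) mod n = i mod n" using path_of_length_fst[OF assms(1)] assms(2) by simp
  then show ?thesis by (simp add: mod_eq_dvd_iff_nat)
qed

lemma is_path_imp_path_of_length_nth:
  "is_path n E vs as \<Longrightarrow> t \<le> length as \<Longrightarrow>
     path_of_length n E t (hd vs) (vs ! t) \<and> path_of_length n E (length as - t) (vs ! t) (last vs)"
proof (induction t arbitrary: vs as)
  case 0
  then have "hd vs = vs ! 0" unfolding is_path_def by (cases vs) auto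
  moreover have "path_of_length n E (length as) (hd vs) (last vs)"
    using "0.prems"(1) unfolding path_of_length_def by blast
  ultimately show ?case by (simp add: path_of_length_0_iff)
next
  case (Suc t)
  then obtain p vs' a as' where eq: "vs = p # vs'" "as = a # as'"
    by (cases vs; cases as) (auto simp: is_path_def)
  with Suc.prems have "vs' \<noteq> []" "is_edge n E p a (hd vs')" "is_path n E vs' as'" "t \<le> length as'"
    by (auto simp: is_path_Cons_iff)
  with Suc.IH[of vs' as'] eq show ?case by (auto simp: path_of_length_Suc_iff simp del: split_paired_Ex)
qed

lemma almost_reduced_closed_path:
  assumes "almost_reduced n V E" "is_vertex n V p"
  shows "path_of_length n E n p p"
proof -
  obtain vs as where "is_cycle n E vs as" "p \<in> set vs"
    using assms unfolding almost_reduced_def by blast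
  then have cyc: "is_path n E vs as" "length as = n" "last vs = hd vs"
    unfolding is_cycle_def by auto
  obtain t where "t < length vs" "vs ! t = p" using \<open>p \<in> set vs\<close> by (metis in_set_conv_nth)
  then have "t \<le> n" using cyc unfolding is_path_def by simp
  \<comment> \<open>go round the cycle from p back to its base point, then on to p\<close>
  with is_path_imp_path_of_length_nth[OF cyc(1)] cyc \<open>vs ! t = p\<close>
  have "path_of_length n E (n - t + t) p p" by (metis path_of_length_trans)
  then show ?thesis using \<open>t \<le> n\<close> by simp
qed

lemma trellis_path_target_is_vertex:
  assumes "trellis n V E" "path_of_length n E (Suc m) p q"
  shows "is_vertex n V q"
proof -
  obtain r a where "is_edge n E r a q"
    using assms(2) path_of_length_add_iff[of n E m 1]
    by (auto simp: path_of_length_Suc_iff path_of_length_0_iff)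
  with assms(1) show ?thesis unfolding trellis_def is_edge_def is_vertex_def by fastforce
qed

lemma linear_trellis_edge_add:
  assumes "linear_trellis scale n V E" "is_edge n E (i, x) a (j, y)" "is_edge n E (i, x') a' (j, y')"
  shows "is_edge n E (i, x + x') (a + a') (j, y + y')"
  using assms unfolding linear_trellis_def is_edge_def by auto

lemma linear_trellis_edge_scale:
  assumes "linear_trellis scale n V E" "is_edge n E (i, x) a (j, y)"
  shows "is_edge n E (i, scale c x) (c * a) (j, scale c y)"
  using assms unfolding linear_trellis_def is_edge_def by auto

lemma linear_trellis_path_add:
  assumes "linear_trellis scale n V E"
    and "path_of_length n E m (i, x) (j, y)" "path_of_length n E m (i, x') (j, y')"
  shows "path_of_length n E m (i, x + x') (j, y + y')"
  using assms(2,3)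
proof (induction m arbitrary: i x x')
  case 0
  then show ?case by (simp add: path_of_length_0_iff)
next
  case (Suc m)
  then obtain a k z a' k' z' where
    "is_edge n E (i, x) a (k, z)" "path_of_length n E m (k, z) (j, y)"
    "is_edge n E (i, x') a' (k', z')" "path_of_length n E m (k', z') (j, y')"
    by (auto simp: path_of_length_Suc_iff)
  moreover from this have "k' = k" unfolding is_edge_def by simp
  ultimately show ?case
    using Suc.IH linear_trellis_edge_add[OF assms(1)] unfolding path_of_length_Suc_iff by blast
qed

lemma linear_trellis_path_scale:
  assumes "linear_trellis scale n V E" "path_of_length n E m (i, x) (j, y)"
  shows "path_of_length n E m (i, scale c x) (j, scale c y)"
  using assms(2)
proof (induction m arbitrary: i x)
  case 0
  then show ?case by (simp add: path_of_length_0_iff)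
next
  case (Suc m)
  then obtain a k z where "is_edge n E (i, x) a (k, z)" "path_of_length n E m (k, z) (j, y)"
    by (auto simp: path_of_length_Suc_iff)
  then show ?case
    using Suc.IH linear_trellis_edge_scale[OF assms(1)] unfolding path_of_length_Suc_iff by blast
qed

lemma linear_trellis_period_path_trans:
  assumes lin: "linear_trellis scale n V E" and ar: "almost_reduced n V E"
    and xz: "path_of_length n E n (i, x) (i, z)" and zy: "path_of_length n E n (i, z) (i, y)"
    and "i < n" "z \<in> V i"
  shows "path_of_length n E n (i, x) (i, y)"
proof -
  have "module scale" using lin unfolding linear_trellis_def by (simp add: module_iff_vector_space)
  then have neg: "scale (- 1) z = - z" by (simp add: module.scale_minus_left module.scale_one)
  have "path_of_length n E n (i, z) (i, z)"
    using almost_reduced_closed_path[OF ar] assms(5,6) unfolding is_vertex_def by simp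
  then have "path_of_length n E n (i, - z) (i, - z)"
    using linear_trellis_path_scale[OF lin, of n i z i z "- 1"] neg by simp
  with linear_trellis_path_add[OF lin linear_trellis_path_add[OF lin xz zy]]
  show ?thesis by fastforce
qed

lemma linear_trellis_multiple_period_path:
  assumes lin: "linear_trellis scale n V E" and ar: "almost_reduced n V E" and "i < n"
  shows "path_of_length n E (Suc k * n) (i, x) (i, y) \<Longrightarrow> path_of_length n E n (i, x) (i, y)"
proof (induction k arbitrary: x)
  case 0
  then show ?case by simp
next
  case (Suc k)
  have tr: "trellis n V E" and "n \<ge> 1" using lin unfolding linear_trellis_def trellis_def by auto
  obtain q where xq: "path_of_length n E n (i, x) q" and qy: "path_of_length n E (Suc k * n) q (i, y)"
    using Suc.prems path_of_length_add_iff[of n E n "Suc k * n"] by auto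
  obtain z where q: "q = (i, z)"
    using path_of_length_fst[OF xq] \<open>i < n\<close> by (cases q) simp
  have "z \<in> V i"
    using trellis_path_target_is_vertex[OF tr, of "n - 1"] xq q \<open>n \<ge> 1\<close> by (fastforce simp: is_vertex_def)
  with linear_trellis_period_path_trans[OF lin ar] Suc.IH xq qy q \<open>i < n\<close> show ?case by blast
qed

lemma linear_trellis_same_layer_period_path:
  assumes lin: "linear_trellis scale n V E" and ar: "almost_reduced n V E"
    and "i < n" "y \<in> V i" "has_path n E (i, x) (i, y)"
  shows "path_of_length n E n (i, x) (i, y)"
proof -
  obtain m where path: "path_of_length n E m (i, x) (i, y)"
    using assms(5) unfolding has_path_def by blast
  obtain k where "m = k * n"
    using path_of_length_same_layer_dvd[OF path \<open>i < n\<close>] by (metis dvdE mult.commute)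
  show ?thesis
  proof (cases k)
    case 0
    then show ?thesis
      using path \<open>m = k * n\<close> almost_reduced_closed_path[OF ar] assms(3,4)
      by (simp add: path_of_length_0_iff is_vertex_def)
  next
    case (Suc k')
    then show ?thesis
      using path \<open>m = k * n\<close> linear_trellis_multiple_period_path[OF lin ar \<open>i < n\<close>] by simp
  qed
qed

theorem mainTheorem18:
  fixes scale :: "'f::{field,finite} \<Rightarrow> 'v::ab_group_add \<Rightarrow> 'v"
    and n :: nat and V :: "nat \<Rightarrow> 'v set" and E :: "nat \<Rightarrow> ('v \<times> 'f \<times> 'v) set"
  assumes "linear_trellis scale n V E"
    and "almost_reduced n V E"
  shows "(\<forall>i < n. \<forall>x \<in> V i. \<forall>y \<in> V i.
            has_path n E (i, x) (i, y) \<longrightarrow> path_of_length n E n (i, x) (i, y))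
       \<and> (connected_trellis n V E \<longrightarrow>
            (\<forall>x \<in> V 0. \<forall>y \<in> V 0. path_of_length n E n (0, x) (0, y) \<and> path_of_length n E n (0, y) (0, x)))"
proof -
  have "0 < n" using assms(1) unfolding linear_trellis_def trellis_def by simp
  have layer: "\<forall>i < n. \<forall>x \<in> V i. \<forall>y \<in> V i.
      has_path n E (i, x) (i, y) \<longrightarrow> path_of_length n E n (i, x) (i, y)"
    using linear_trellis_same_layer_period_path[OF assms] by blast
  have "path_of_length n E n (0, x) (0, y)"
    if "connected_trellis n V E" "x \<in> V 0" "y \<in> V 0" for x y
  proof (cases "x = y")
    case True
    then show ?thesis
      using almost_reduced_closed_path[OF assms(2)] \<open>0 < n\<close> that(2) by (simp add: is_vertex_def)
  next
    case False
    then show ?thesis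
      using layer \<open>0 < n\<close> that unfolding connected_trellis_def is_vertex_def by simp
  qed
  with layer show ?thesis by blast
qed

end
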